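(* There exists an absolute constant $C>0$ such that for all integers $1\le s\le d$, all $\sigma>0$, any $\boldsymbol\theta\in B_0(s,d)$, any $\boldsymbol\Sigma$ satisfying Assumption $(\varepsilon^*1)$ and any $z\in\mathbb R$, \[ \mathbf E_{\boldsymbol\theta,\boldsymbol\Sigma}\left[\left(\frac{\hat\varphi_d(z)}{e^{-z^2\sigma^2/2}}-1\right)^2\right]\le C\left(\frac{s^2}{d^2}+\frac{\|\tilde{\boldsymbol\Sigma}\|_F^2}{d^2}\Big(\frac{s}{\|\tilde{\boldsymbol\Sigma}\|_F}\vee1\Big)e^{z^2\sigma^2}\right). \] Furthermore, if $s\le d/8$, then for any $z\in\mathbb R$, \[ \mathbf P_{\boldsymbol\theta,\boldsymbol\Sigma}\left[\tfrac12e^{-z^2\sigma^2/2}\le\hat\varphi_d(z)\le\tfrac32e^{-z^2\sigma^2/2}\right]\ge1-C\frac{\|\tilde{\boldsymbol\Sigma}\|_F^2}{d^2}\Big(\frac{s}{\|\tilde{\boldsymbol\Sigma}\|_F}\vee1\Big)e^{z^2\sigma^2}. \]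
   Context: Model: one observes $\boldsymbol Y=\boldsymbol\theta+\sigma\boldsymbol\varepsilon\in\mathbb R^d$, $\boldsymbol\varepsilon\sim\mathcal N(\boldsymbol0,\boldsymbol\Sigma)$, $\boldsymbol\Sigma$ a covariance matrix with known diagonal entries $\sigma_i^2$, $\sigma>0$. $B_0(s,d)=\{\boldsymbol\theta:\|\boldsymbol\theta\|_0\le s\}$. Assumption $(\varepsilon^*1)$: $\min_i\sigma_i^2\ge c_*$ for a constant $c_*>0$. $\tilde Y_i=Y_i/\sigma_i$, $\tilde{\boldsymbol\Sigma}_{ij}=\boldsymbol\Sigma_{ij}/(\sigma_i\sigma_j)$, and $\hat\varphi_d(u)=\frac1d\sum_{i=1}^d\cos(u\tilde Y_i)$. *)

theory Defs
  imports "HOL-Probability.Probability"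
begin

text \<open>Noise model: \<epsilon> = A g with g a vector of d i.i.d. standard Gaussians, so that
  \<epsilon> ~ N(0, \<Sigma>) with \<Sigma> = A A^T.  Every covariance (PSD) matrix arises this way.\<close>

definition gauss_space :: "nat \<Rightarrow> (nat \<Rightarrow> real) measure" where
  "gauss_space d = PiM {..<d} (\<lambda>_. density lborel std_normal_density)"

definition cov_of :: "nat \<Rightarrow> (nat \<Rightarrow> nat \<Rightarrow> real) \<Rightarrow> nat \<Rightarrow> nat \<Rightarrow> real" where
  "cov_of d A i j = (\<Sum>k<d. A i k * A j k)"

definition noise :: "nat \<Rightarrow> (nat \<Rightarrow> nat \<Rightarrow> real) \<Rightarrow> (nat \<Rightarrow> real) \<Rightarrow> nat \<Rightarrow> real" where
  "noise d A g i = (\<Sum>k<d. A i k * g k)"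

definition obs :: "nat \<Rightarrow> (nat \<Rightarrow> real) \<Rightarrow> real \<Rightarrow> (nat \<Rightarrow> nat \<Rightarrow> real) \<Rightarrow> (nat \<Rightarrow> real) \<Rightarrow> nat \<Rightarrow> real" where
  "obs d \<theta> \<sigma> A g i = \<theta> i + \<sigma> * noise d A g i"

definition sd_i :: "nat \<Rightarrow> (nat \<Rightarrow> nat \<Rightarrow> real) \<Rightarrow> nat \<Rightarrow> real" where
  "sd_i d A i = sqrt (cov_of d A i i)"

definition cov_tilde :: "nat \<Rightarrow> (nat \<Rightarrow> nat \<Rightarrow> real) \<Rightarrow> nat \<Rightarrow> nat \<Rightarrow> real" where
  "cov_tilde d A i j = cov_of d A i j / (sd_i d A i * sd_i d A j)"

definition frob_tilde :: "nat \<Rightarrow> (nat \<Rightarrow> nat \<Rightarrow> real) \<Rightarrow> real" where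
  "frob_tilde d A = sqrt (\<Sum>i<d. \<Sum>j<d. (cov_tilde d A i j)\<^sup>2)"

definition phi_hat :: "nat \<Rightarrow> (nat \<Rightarrow> real) \<Rightarrow> real \<Rightarrow> (nat \<Rightarrow> nat \<Rightarrow> real) \<Rightarrow> real \<Rightarrow> (nat \<Rightarrow> real) \<Rightarrow> real" where
  "phi_hat d \<theta> \<sigma> A u g = (1 / real d) * (\<Sum>i<d. cos (u * (obs d \<theta> \<sigma> A g i / sd_i d A i)))"

definition B0 :: "nat \<Rightarrow> nat \<Rightarrow> (nat \<Rightarrow> real) set" where
  "B0 s d = {\<theta>. card {i \<in> {..<d}. \<theta> i \<noteq> 0} \<le> s}"

end

theory Submission
  imports Defs "HOL-Probability.Characteristic_Functions"
begin

(* Writing \<epsilon> = A g with g standard Gaussian, \<phi>hat_d(z) is the average of cos (u_i + <w_i, g>) with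
   u_i = z \<theta>_i / \<sigma>_i and rows w_i = z \<sigma> A_i / \<sigma>_i, so that |w_i|^2 = T := z^2 \<sigma>^2 and
   <w_i, w_j> = T \<rho>_ij with \<rho> the correlation matrix.  The Gaussian characteristic function gives
   the mean e^(-T/2) m, m = (1/d) \<Sum> cos u_i, and, via cos a cos b = (cos (a - b) + cos (a + b)) / 2,
   the second moment; the variance of \<phi>hat_d(z) e^(T/2) is then
   d^-2 \<Sum>_ij (cos u_i cos u_j (cosh (\<rho>_ij T) - 1) + sin u_i sin u_j sinh (\<rho>_ij T)).
   Since cosh (\<rho> T) - 1 \<le> \<rho>^2 (cosh T - 1) and |sinh (\<rho> T)| \<le> |\<rho>| sinh T, and at most s of
   the u_i are nonzero, Cauchy-Schwarz bounds it by (|\<rho>|_F^2 + s |\<rho>|_F) e^T / d^2.  The bias 1 - m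
   lies in [0, 2s/d]; the mean-square bound is bias^2 + variance and the probability bound is
   Chebyshev's inequality around m, which is within 1/4 of 1 when s \<le> d/8. *)

lemma prob_space_gauss_space: "prob_space (gauss_space d)"
  unfolding gauss_space_def
  by (intro prob_space_PiM real_distribution.axioms(1) real_dist_normal_dist)

lemma integral_gauss_space_iexp_linear:
  "(\<integral>g. iexp (a + (\<Sum>k<d. w k * g k)) \<partial>gauss_space d)
     = iexp a * complex_of_real (exp (- (\<Sum>k<d. (w k)\<^sup>2) / 2))"
proof -
  interpret product_prob_space "\<lambda>_. std_normal_distribution"
    by (intro product_prob_spaceI real_distribution.axioms(1) real_dist_normal_dist)
  have integrable_factor: "integrable std_normal_distribution (\<lambda>x. iexp (w k * x))" for k
    by (intro prob_space.integrable_iexp real_distribution.axioms(1) real_dist_normal_dist) auto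
  have "(\<integral>g. (\<Prod>k<d. iexp (w k * g k)) \<partial>gauss_space d) = (\<Prod>k<d. char std_normal_distribution (w k))"
    using product_integral_prod[of "{..<d}" "\<lambda>k x. iexp (w k * x)"] integrable_factor
    by (simp add: gauss_space_def char_def)
  also have "\<dots> = complex_of_real (exp (- (\<Sum>k<d. (w k)\<^sup>2) / 2))"
    by (simp add: char_std_normal_distribution exp_sum sum_divide_distrib sum_negf[symmetric]
        of_real_prod[symmetric] del: of_real_prod)
  finally show ?thesis
    by (simp add: distrib_left sum_distrib_left exp_add exp_sum)
qed

lemma integral_gauss_space_cos_linear:
  "(\<integral>g. cos (a + (\<Sum>k<d. w k * g k)) \<partial>gauss_space d) = cos a * exp (- (\<Sum>k<d. (w k)\<^sup>2) / 2)"
proof -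
  interpret prob_space "gauss_space d" by (rule prob_space_gauss_space)
  have "(\<integral>g. cos (a + (\<Sum>k<d. w k * g k)) \<partial>gauss_space d)
      = Re (\<integral>g. iexp (a + (\<Sum>k<d. w k * g k)) \<partial>gauss_space d)"
  proof (subst integral_Re[symmetric])
    show "integrable (gauss_space d) (\<lambda>g. iexp (a + (\<Sum>k<d. w k * g k)))"
      unfolding gauss_space_def by (rule integrable_iexp[unfolded gauss_space_def]) auto
  qed (simp add: cos_exp_eq Re_exp)
  also have "\<dots> = cos a * exp (- (\<Sum>k<d. (w k)\<^sup>2) / 2)"
    unfolding integral_gauss_space_iexp_linear by (simp add: Re_exp)
  finally show ?thesis .
qed

lemma integrable_gauss_space_cos_linear:
  "integrable (gauss_space d) (\<lambda>g. cos (a + (\<Sum>k<d. w k * g k)))"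
proof -
  interpret prob_space "gauss_space d" by (rule prob_space_gauss_space)
  show ?thesis
    by (rule integrable_const_bound[where B = 1]) (auto simp: gauss_space_def)
qed

lemma integral_gauss_space_cos_mult_cos:
  "(\<integral>g. cos (a + (\<Sum>k<d. v k * g k)) * cos (b + (\<Sum>k<d. w k * g k)) \<partial>gauss_space d)
     = (cos (a - b) * exp (- (\<Sum>k<d. (v k - w k)\<^sup>2) / 2)
        + cos (a + b) * exp (- (\<Sum>k<d. (v k + w k)\<^sup>2) / 2)) / 2"
proof -
  have "(\<lambda>g. cos (a + (\<Sum>k<d. v k * g k)) * cos (b + (\<Sum>k<d. w k * g k)))
      = (\<lambda>g. (cos ((a - b) + (\<Sum>k<d. (v k - w k) * g k))
               + cos ((a + b) + (\<Sum>k<d. (v k + w k) * g k))) / 2)"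
    by (simp add: cos_times_cos sum_subtractf sum.distrib algebra_simps)
  then show ?thesis
    by (simp add: integrable_gauss_space_cos_linear integral_gauss_space_cos_linear)
qed

definition cos_avg :: "nat \<Rightarrow> (nat \<Rightarrow> real) \<Rightarrow> (nat \<Rightarrow> nat \<Rightarrow> real) \<Rightarrow> (nat \<Rightarrow> real) \<Rightarrow> real" where
  "cos_avg d u w g = (1 / real d) * (\<Sum>i<d. cos (u i + (\<Sum>k<d. w i k * g k)))"

(* e^T E[cos (a + X) cos (b + Y)] for centred Gaussians X, Y of variance T and correlation r *)
definition cos_moment :: "real \<Rightarrow> real \<Rightarrow> real \<Rightarrow> real \<Rightarrow> real" where
  "cos_moment T r a b = (cos (a - b) * exp (r * T) + cos (a + b) * exp (- (r * T))) / 2"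

lemma cos_avg_measurable [measurable]: "cos_avg d u w \<in> borel_measurable (gauss_space d)"
  unfolding cos_avg_def[abs_def] gauss_space_def by measurable

lemma abs_cos_avg_le_1: "\<bar>cos_avg d u w g\<bar> \<le> 1"
proof -
  have "\<bar>\<Sum>i<d. cos (u i + (\<Sum>k<d. w i k * g k))\<bar> \<le> (\<Sum>i<d. 1)"
    by (rule order_trans[OF sum_abs sum_mono]) simp
  then show ?thesis
    by (cases "d = 0") (simp_all add: cos_avg_def abs_mult field_simps)
qed

lemma integrable_cos_avg_power: "integrable (gauss_space d) (\<lambda>g. (cos_avg d u w g) ^ n)"
proof -
  interpret prob_space "gauss_space d" by (rule prob_space_gauss_space)
  show ?thesis
  proof (rule integrable_const_bound[where B = 1])
    show "AE g in gauss_space d. norm ((cos_avg d u w g) ^ n) \<le> 1"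
      by (intro AE_I2) (simp add: power_abs abs_cos_avg_le_1 power_le_one)
  qed simp
qed

lemma integral_cos_avg:
  assumes "\<And>i. i < d \<Longrightarrow> (\<Sum>k<d. (w i k)\<^sup>2) = T"
  shows "(\<integral>g. cos_avg d u w g \<partial>gauss_space d) = exp (- T / 2) * ((1 / real d) * (\<Sum>i<d. cos (u i)))"
proof -
  have "(\<integral>g. cos_avg d u w g \<partial>gauss_space d)
      = (1 / real d) * (\<Sum>i<d. \<integral>g. cos (u i + (\<Sum>k<d. w i k * g k)) \<partial>gauss_space d)"
    unfolding cos_avg_def by (simp add: integrable_gauss_space_cos_linear)
  also have "\<dots> = (1 / real d) * (\<Sum>i<d. cos (u i) * exp (- T / 2))"
    using assms by (intro arg_cong[where f = "(*) (1 / real d)"] sum.cong)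
      (simp_all add: integral_gauss_space_cos_linear)
  also have "\<dots> = exp (- T / 2) * ((1 / real d) * (\<Sum>i<d. cos (u i)))"
    by (simp add: sum_distrib_right[symmetric] mult_ac)
  finally show ?thesis .
qed

lemma integral_cos_avg_sq:
  assumes norm: "\<And>i. i < d \<Longrightarrow> (\<Sum>k<d. (w i k)\<^sup>2) = T"
    and inner: "\<And>i j. i < d \<Longrightarrow> j < d \<Longrightarrow> (\<Sum>k<d. w i k * w j k) = T * \<rho> i j"
  shows "(\<integral>g. (cos_avg d u w g)\<^sup>2 \<partial>gauss_space d)
    = exp (- T) * ((1 / (real d)\<^sup>2) * (\<Sum>i<d. \<Sum>j<d. cos_moment T (\<rho> i j) (u i) (u j)))"
proof -
  let ?X = "\<lambda>i g. cos (u i + (\<Sum>k<d. w i k * g k))"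
  have pair: "(\<integral>g. ?X i g * ?X j g \<partial>gauss_space d) = exp (- T) * cos_moment T (\<rho> i j) (u i) (u j)"
    if "i < d" "j < d" for i j
  proof -
    have diff_sq: "(\<Sum>k<d. (w i k - w j k)\<^sup>2) = 2 * T - 2 * (T * \<rho> i j)"
      and sum_sq: "(\<Sum>k<d. (w i k + w j k)\<^sup>2) = 2 * T + 2 * (T * \<rho> i j)"
      using norm[OF that(1)] norm[OF that(2)] inner[OF that]
      by (simp_all add: power2_diff power2_sum sum_subtractf sum.distrib
          sum_distrib_left[symmetric] mult.assoc)
    then show ?thesis
      unfolding integral_gauss_space_cos_mult_cos diff_sq sum_sq
      by (simp add: cos_moment_def diff_divide_distrib add_divide_distrib algebra_simps)
        (simp add: exp_diff exp_minus field_simps)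
  qed
  interpret prob_space "gauss_space d" by (rule prob_space_gauss_space)
  have integrable_pair: "integrable (gauss_space d) (\<lambda>g. ?X i g * ?X j g)" for i j
    by (rule integrable_const_bound[where B = 1])
      (auto simp: gauss_space_def abs_mult intro!: mult_le_one)
  have "(\<integral>g. (cos_avg d u w g)\<^sup>2 \<partial>gauss_space d)
      = (\<integral>g. (1 / (real d)\<^sup>2) * (\<Sum>i<d. \<Sum>j<d. ?X i g * ?X j g) \<partial>gauss_space d)"
    by (simp add: cos_avg_def power2_eq_square sum_product)
  also have "\<dots> = (1 / (real d)\<^sup>2) * (\<Sum>i<d. \<Sum>j<d. \<integral>g. ?X i g * ?X j g \<partial>gauss_space d)"
    by (simp add: integrable_pair)
  also have "\<dots> = exp (- T) * ((1 / (real d)\<^sup>2) * (\<Sum>i<d. \<Sum>j<d. cos_moment T (\<rho> i j) (u i) (u j)))"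
    by (simp add: pair sum_distrib_left)
  finally show ?thesis .
qed

lemma integral_cos_avg_centered_sq:
  fixes u :: "nat \<Rightarrow> real"
  assumes norm: "\<And>i. i < d \<Longrightarrow> (\<Sum>k<d. (w i k)\<^sup>2) = T"
    and inner: "\<And>i j. i < d \<Longrightarrow> j < d \<Longrightarrow> (\<Sum>k<d. w i k * w j k) = T * \<rho> i j"
  defines "m \<equiv> (1 / real d) * (\<Sum>i<d. cos (u i))"
  shows "(\<integral>g. (cos_avg d u w g / exp (- T / 2) - m)\<^sup>2 \<partial>gauss_space d)
    = (1 / (real d)\<^sup>2) * (\<Sum>i<d. \<Sum>j<d. cos_moment T (\<rho> i j) (u i) (u j) - cos (u i) * cos (u j))"
proof -
  interpret prob_space "gauss_space d" by (rule prob_space_gauss_space)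
  define E where "E = exp (- T / 2)"
  have "(\<lambda>g. (cos_avg d u w g / E - m)\<^sup>2)
      = (\<lambda>g. (cos_avg d u w g)\<^sup>2 / E\<^sup>2 - (2 * m / E) * cos_avg d u w g + m\<^sup>2)"
    by (simp add: power2_diff power_divide algebra_simps)
  then have "(\<integral>g. (cos_avg d u w g / E - m)\<^sup>2 \<partial>gauss_space d)
      = (\<integral>g. (cos_avg d u w g)\<^sup>2 \<partial>gauss_space d) / E\<^sup>2
        - (2 * m / E) * (\<integral>g. cos_avg d u w g \<partial>gauss_space d) + m\<^sup>2"
    using integrable_cos_avg_power[of d u w 1] integrable_cos_avg_power[of d u w 2]
    by (simp add: prob_space)
  also have "\<dots> = (1 / (real d)\<^sup>2) * (\<Sum>i<d. \<Sum>j<d. cos_moment T (\<rho> i j) (u i) (u j)) - m\<^sup>2"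
    using integral_cos_avg_sq[of d w T \<rho> u] integral_cos_avg[of d w T u] norm inner
    by (simp add: E_def m_def power2_eq_square mult_exp_exp)
  also have "\<dots> = (1 / (real d)\<^sup>2) * (\<Sum>i<d. \<Sum>j<d. cos_moment T (\<rho> i j) (u i) (u j) - cos (u i) * cos (u j))"
    by (simp add: m_def power2_eq_square power_mult_distrib sum_product sum_subtractf right_diff_distrib)
  finally show ?thesis by (simp add: E_def)
qed

lemma sinh_mult_le:
  fixes r y :: real
  assumes "0 \<le> r" "r \<le> 1" "0 \<le> y"
  shows "sinh (r * y) \<le> r * sinh y"
proof -
  let ?f = "\<lambda>t. r * sinh t - sinh (r * t)"
  have "?f 0 \<le> ?f y"
  proof (rule DERIV_nonneg_imp_increasing_open[OF assms(3)])
    fix t :: real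
    assume t: "0 < t" "t < y"
    have "cosh (r * t) \<le> cosh t"
      using t assms by (subst cosh_real_nonneg_le_iff) (auto simp: mult_left_le_one_le)
    then have "0 \<le> r * cosh t - cosh (r * t) * r"
      using assms by (simp add: mult.commute mult_left_mono)
    moreover have "DERIV ?f t :> r * cosh t - cosh (r * t) * r"
      by (auto intro!: derivative_eq_intros)
    ultimately show "\<exists>y. DERIV ?f t :> y \<and> 0 \<le> y" by blast
  qed (intro continuous_intros)
  then show ?thesis by simp
qed

lemma abs_sinh_mult_le:
  fixes r T :: real
  assumes "\<bar>r\<bar> \<le> 1"
  shows "\<bar>sinh (r * T)\<bar> \<le> \<bar>r\<bar> * \<bar>sinh T\<bar>"
proof -
  have "\<bar>sinh (r * T)\<bar> = sinh (\<bar>r\<bar> * \<bar>T\<bar>)"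
    by (metis abs_mult sinh_real_abs)
  also have "\<dots> \<le> \<bar>r\<bar> * sinh \<bar>T\<bar>"
    using assms by (intro sinh_mult_le) auto
  finally show ?thesis by simp
qed

lemma cosh_mult_sub_one_le:
  fixes r T :: real
  assumes "\<bar>r\<bar> \<le> 1"
  shows "cosh (r * T) - 1 \<le> r\<^sup>2 * (cosh T - 1)"
proof -
  have half_angle: "cosh x - 1 = 2 * (sinh (x / 2))\<^sup>2" for x :: real
    using cosh_double[of "x / 2"] cosh_square_eq[of "x / 2"] by simp
  have "(sinh (r * T / 2))\<^sup>2 \<le> (r * sinh (T / 2))\<^sup>2"
    using abs_sinh_mult_le[OF assms, of "T / 2"]
    by (simp add: abs_le_square_iff[symmetric] abs_mult)
  then show ?thesis
    unfolding half_angle[of "r * T"] half_angle[of T] by (simp add: power_mult_distrib)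
qed

lemma cos_moment_eq:
  "cos_moment T r a b = cos a * cos b * cosh (r * T) + sin a * sin b * sinh (r * T)"
  by (simp add: cos_moment_def cos_add cos_diff cosh_field_def sinh_field_def
      algebra_simps add_divide_distrib diff_divide_distrib)

lemma cos_moment_sub_cos_mult_le:
  fixes T r a b :: real
  assumes "\<bar>r\<bar> \<le> 1" "0 \<le> T"
  shows "cos_moment T r a b - cos a * cos b \<le> (r\<^sup>2 + \<bar>sin a\<bar> * \<bar>sin b\<bar> * \<bar>r\<bar>) * exp T"
proof -
  have "0 \<le> sinh T"
    using assms(2) by simp
  then have cosh_T: "cosh T - 1 \<le> exp T" and sinh_T: "\<bar>sinh T\<bar> \<le> exp T"
    using cosh_plus_sinh[of T] cosh_real_pos[of T] by linarith+
  have "\<bar>cos a * cos b\<bar> \<le> 1"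
    by (simp add: abs_mult mult_le_one)
  then have "cos a * cos b * (cosh (r * T) - 1) \<le> 1 * (cosh (r * T) - 1)"
    using cosh_real_ge_1[of "r * T"] by (intro mult_right_mono) auto
  also have "\<dots> \<le> r\<^sup>2 * exp T"
    using cosh_mult_sub_one_le[OF assms(1), of T] mult_left_mono[OF cosh_T, of "r\<^sup>2"] by simp
  finally have cosh_part: "cos a * cos b * (cosh (r * T) - 1) \<le> r\<^sup>2 * exp T" .
  have "sin a * sin b * sinh (r * T) \<le> \<bar>sin a\<bar> * \<bar>sin b\<bar> * \<bar>sinh (r * T)\<bar>"
    by (metis abs_ge_self abs_mult)
  also have "\<dots> \<le> \<bar>sin a\<bar> * \<bar>sin b\<bar> * (\<bar>r\<bar> * exp T)"
    using abs_sinh_mult_le[OF assms(1), of T] mult_left_mono[OF sinh_T, of "\<bar>r\<bar>"]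
    by (intro mult_left_mono) auto
  finally have sinh_part: "sin a * sin b * sinh (r * T) \<le> \<bar>sin a\<bar> * \<bar>sin b\<bar> * \<bar>r\<bar> * exp T"
    by (simp add: mult.assoc)
  show ?thesis
    using cosh_part sinh_part by (simp add: cos_moment_eq algebra_simps)
qed

lemma sum_sparse_le:
  fixes u f :: "nat \<Rightarrow> real"
  assumes "card {i \<in> {..<d}. u i \<noteq> 0} \<le> s"
    and "\<And>i. u i = 0 \<Longrightarrow> f i = 0" and "\<And>i. f i \<le> B" and "0 \<le> B"
  shows "(\<Sum>i<d. f i) \<le> B * s"
proof -
  let ?N = "{i \<in> {..<d}. u i \<noteq> 0}"
  have "(\<Sum>i<d. f i) = (\<Sum>i\<in>?N. f i)"
    using assms(2) by (intro sum.mono_neutral_right) auto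
  also have "\<dots> \<le> B * card ?N"
    using sum_bounded_above[of ?N f B] assms(3) by (simp add: mult.commute)
  also have "\<dots> \<le> B * s"
    using assms(1,4) by (intro mult_left_mono) auto
  finally show ?thesis .
qed

definition frob_norm :: "nat \<Rightarrow> (nat \<Rightarrow> nat \<Rightarrow> real) \<Rightarrow> real" where
  "frob_norm d \<rho> = sqrt (\<Sum>i<d. \<Sum>j<d. (\<rho> i j)\<^sup>2)"

lemma frob_norm_nonneg: "0 \<le> frob_norm d \<rho>"
  by (simp add: frob_norm_def sum_nonneg)

lemma sum_abs_sin_mult_le_frob_norm:
  fixes u :: "nat \<Rightarrow> real" and \<rho> :: "nat \<Rightarrow> nat \<Rightarrow> real"
  assumes "card {i \<in> {..<d}. u i \<noteq> 0} \<le> s"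
  shows "(\<Sum>i<d. \<Sum>j<d. \<bar>sin (u i)\<bar> * \<bar>sin (u j)\<bar> * \<bar>\<rho> i j\<bar>) \<le> s * frob_norm d \<rho>"
proof -
  let ?P = "{..<d} \<times> {..<d}"
  let ?L = "\<Sum>i<d. \<Sum>j<d. \<bar>sin (u i)\<bar> * \<bar>sin (u j)\<bar> * \<bar>\<rho> i j\<bar>"
  let ?R = "\<Sum>i<d. \<Sum>j<d. (\<rho> i j)\<^sup>2"
  have R_nonneg: "0 \<le> ?R" by (intro sum_nonneg) auto
  have sin_sq: "(\<Sum>i<d. (sin (u i))\<^sup>2) \<le> 1 * real s"
    using assms by (rule sum_sparse_le) (auto simp: abs_square_le_1)
  have "?L\<^sup>2 \<le> (\<Sum>p\<in>?P. (\<bar>sin (u (fst p))\<bar> * \<bar>sin (u (snd p))\<bar>)\<^sup>2) * (\<Sum>p\<in>?P. \<bar>\<rho> (fst p) (snd p)\<bar>\<^sup>2)"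
    using Cauchy_Schwarz_ineq_sum[of "\<lambda>p. \<bar>sin (u (fst p))\<bar> * \<bar>sin (u (snd p))\<bar>"
        "\<lambda>p. \<bar>\<rho> (fst p) (snd p)\<bar>" ?P]
    by (simp add: sum.cartesian_product case_prod_beta)
  also have "\<dots> = (\<Sum>i<d. (sin (u i))\<^sup>2)\<^sup>2 * ?R"
    by (simp add: sum.cartesian_product[symmetric] power2_eq_square sum_product
        sum.cartesian_product case_prod_beta algebra_simps)
  also have "\<dots> \<le> (s * frob_norm d \<rho>)\<^sup>2"
    using sin_sq R_nonneg
    by (simp add: frob_norm_def power_mult_distrib mult_right_mono power_mono sum_nonneg)
  finally show ?thesis
    by (rule power2_le_imp_le) (simp add: frob_norm_nonneg)
qed

lemma cos_moment_excess_le: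
  fixes u :: "nat \<Rightarrow> real" and \<rho> :: "nat \<Rightarrow> nat \<Rightarrow> real"
  assumes "card {i \<in> {..<d}. u i \<noteq> 0} \<le> s"
    and "\<And>i j. i < d \<Longrightarrow> j < d \<Longrightarrow> \<bar>\<rho> i j\<bar> \<le> 1" and "0 \<le> T"
  shows "(\<Sum>i<d. \<Sum>j<d. cos_moment T (\<rho> i j) (u i) (u j) - cos (u i) * cos (u j))
    \<le> ((frob_norm d \<rho>)\<^sup>2 + s * frob_norm d \<rho>) * exp T"
proof -
  have "(\<Sum>i<d. \<Sum>j<d. cos_moment T (\<rho> i j) (u i) (u j) - cos (u i) * cos (u j))
      \<le> (\<Sum>i<d. \<Sum>j<d. ((\<rho> i j)\<^sup>2 + \<bar>sin (u i)\<bar> * \<bar>sin (u j)\<bar> * \<bar>\<rho> i j\<bar>) * exp T)"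
    using assms(2,3) by (intro sum_mono cos_moment_sub_cos_mult_le) auto
  also have "\<dots> = ((frob_norm d \<rho>)\<^sup>2 + (\<Sum>i<d. \<Sum>j<d. \<bar>sin (u i)\<bar> * \<bar>sin (u j)\<bar> * \<bar>\<rho> i j\<bar>)) * exp T"
    by (simp add: frob_norm_def sum_nonneg distrib_right sum.distrib sum_distrib_right[symmetric])
  also have "\<dots> \<le> ((frob_norm d \<rho>)\<^sup>2 + s * frob_norm d \<rho>) * exp T"
    using sum_abs_sin_mult_le_frob_norm[OF assms(1)] by simp
  finally show ?thesis .
qed

lemma one_sub_cos_mean_bounds:
  fixes u :: "nat \<Rightarrow> real"
  assumes "0 < d" and "card {i \<in> {..<d}. u i \<noteq> 0} \<le> s"
  shows "0 \<le> 1 - (1 / real d) * (\<Sum>i<d. cos (u i))"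
    and "1 - (1 / real d) * (\<Sum>i<d. cos (u i)) \<le> 2 * real s / real d"
proof -
  have mean: "1 - (1 / real d) * (\<Sum>i<d. cos (u i)) = (\<Sum>i<d. 1 - cos (u i)) / d"
    using assms(1) by (simp add: sum_subtractf field_simps)
  show "0 \<le> 1 - (1 / real d) * (\<Sum>i<d. cos (u i))"
    unfolding mean by (intro divide_nonneg_nonneg sum_nonneg) auto
  have "1 - cos x \<le> 2" for x :: real
    using cos_ge_minus_one[of x] by linarith
  then have "(\<Sum>i<d. 1 - cos (u i)) \<le> 2 * real s"
    by (intro sum_sparse_le[OF assms(2)]) auto
  then show "1 - (1 / real d) * (\<Sum>i<d. cos (u i)) \<le> 2 * real s / real d"
    unfolding mean by (simp add: divide_right_mono)
qed

lemma sq_add_mult_le_max: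
  fixes F s :: real
  assumes "0 \<le> F" "0 \<le> s"
  shows "F\<^sup>2 + s * F \<le> 2 * (F\<^sup>2 * max (s / F) 1)"
proof (cases "F = 0")
  case False
  then have "s * F = F\<^sup>2 * (s / F)"
    by (simp add: power2_eq_square)
  also have "\<dots> \<le> F\<^sup>2 * max (s / F) 1"
    by (intro mult_left_mono) auto
  moreover have "F\<^sup>2 \<le> F\<^sup>2 * max (s / F) 1"
    by (simp add: mult_le_cancel_left1)
  ultimately show ?thesis by simp
qed simp

lemma (in prob_space) integral_sq_sub_eq_variance_add:
  fixes X :: "'a \<Rightarrow> real"
  assumes "integrable M X" and "integrable M (\<lambda>x. (X x)\<^sup>2)"
  shows "(\<integral>x. (X x - b)\<^sup>2 \<partial>M) = variance X + (expectation X - b)\<^sup>2"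
  using assms by (simp add: variance_eq power2_diff prob_space power2_eq_square algebra_simps)

lemma (in prob_space) prob_between_halves_ge:
  fixes X :: "'a \<Rightarrow> real"
  assumes [measurable]: "X \<in> borel_measurable M"
    and "integrable M (\<lambda>x. (X x)\<^sup>2)" and "\<bar>expectation X - 1\<bar> \<le> 1 / 4"
  shows "1 - 16 * variance X \<le> prob {x \<in> space M. 1 / 2 \<le> X x \<and> X x \<le> 3 / 2}"
proof -
  let ?G = "{x \<in> space M. 1 / 2 \<le> X x \<and> X x \<le> 3 / 2}"
  have "space M - ?G \<subseteq> {x \<in> space M. 1 / 4 \<le> \<bar>X x - expectation X\<bar>}"
    using assms(3) by (auto simp: abs_if split: if_split_asm)
  then have "prob (space M - ?G) \<le> prob {x \<in> space M. 1 / 4 \<le> \<bar>X x - expectation X\<bar>}"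
    by (intro finite_measure_mono) measurable
  also have "\<dots> \<le> variance X / (1 / 4)\<^sup>2"
    using assms(2) by (intro Chebyshev_inequality) auto
  finally show ?thesis
    using prob_compl[of ?G] by (simp add: power2_eq_square)
qed

locale gaussian_cos_model =
  fixes d s :: nat and T :: real and u :: "nat \<Rightarrow> real" and w \<rho> :: "nat \<Rightarrow> nat \<Rightarrow> real"
  assumes d_pos: "0 < d"
    and norm: "\<And>i. i < d \<Longrightarrow> (\<Sum>k<d. (w i k)\<^sup>2) = T"
    and inner: "\<And>i j. i < d \<Longrightarrow> j < d \<Longrightarrow> (\<Sum>k<d. w i k * w j k) = T * \<rho> i j"
    and corr: "\<And>i j. i < d \<Longrightarrow> j < d \<Longrightarrow> \<bar>\<rho> i j\<bar> \<le> 1"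
    and T_nonneg: "0 \<le> T"
    and sparse: "card {i \<in> {..<d}. u i \<noteq> 0} \<le> s"
begin

lemma normalized_moments:
  defines "Z \<equiv> \<lambda>g. cos_avg d u w g / exp (- T / 2)"
    and "m \<equiv> (1 / real d) * (\<Sum>i<d. cos (u i))"
  shows "integrable (gauss_space d) Z" and "integrable (gauss_space d) (\<lambda>g. (Z g)\<^sup>2)"
    and "(\<integral>g. Z g \<partial>gauss_space d) = m"
    and "(\<integral>g. (Z g - m)\<^sup>2 \<partial>gauss_space d)
      \<le> 2 * ((frob_norm d \<rho>)\<^sup>2 / (real d)\<^sup>2 * max (real s / frob_norm d \<rho>) 1 * exp T)"
    and "0 \<le> 1 - m" and "1 - m \<le> 2 * real s / real d"
proof -
  show "integrable (gauss_space d) Z"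
    using integrable_cos_avg_power[of d u w 1] by (simp add: Z_def)
  show "integrable (gauss_space d) (\<lambda>g. (Z g)\<^sup>2)"
    using integrable_cos_avg_power[of d u w 2] by (simp add: Z_def power_divide)
  show "(\<integral>g. Z g \<partial>gauss_space d) = m"
    using integral_cos_avg[of d w T u] norm by (simp add: Z_def m_def)
  have "(\<integral>g. (Z g - m)\<^sup>2 \<partial>gauss_space d)
      = (1 / (real d)\<^sup>2) * (\<Sum>i<d. \<Sum>j<d. cos_moment T (\<rho> i j) (u i) (u j) - cos (u i) * cos (u j))"
    unfolding Z_def m_def using norm inner by (rule integral_cos_avg_centered_sq)
  also have "\<dots> \<le> (1 / (real d)\<^sup>2) * (((frob_norm d \<rho>)\<^sup>2 + s * frob_norm d \<rho>) * exp T)"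
    using sparse corr T_nonneg by (intro mult_left_mono cos_moment_excess_le) auto
  also have "\<dots> \<le> (1 / (real d)\<^sup>2) * (2 * ((frob_norm d \<rho>)\<^sup>2 * max (real s / frob_norm d \<rho>) 1) * exp T)"
    using sq_add_mult_le_max[of "frob_norm d \<rho>" s] frob_norm_nonneg[of d \<rho>]
    by (intro mult_left_mono mult_right_mono) auto
  finally show "(\<integral>g. (Z g - m)\<^sup>2 \<partial>gauss_space d)
      \<le> 2 * ((frob_norm d \<rho>)\<^sup>2 / (real d)\<^sup>2 * max (real s / frob_norm d \<rho>) 1 * exp T)"
    by simp
  show "0 \<le> 1 - m" and "1 - m \<le> 2 * real s / real d"
    unfolding m_def using one_sub_cos_mean_bounds[OF d_pos sparse] by simp_all
qed

lemma mean_square_error_le: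
  "(\<integral>g. (cos_avg d u w g / exp (- T / 2) - 1)\<^sup>2 \<partial>gauss_space d)
    \<le> 4 * ((real s)\<^sup>2 / (real d)\<^sup>2
      + (frob_norm d \<rho>)\<^sup>2 / (real d)\<^sup>2 * max (real s / frob_norm d \<rho>) 1 * exp T)"
proof -
  interpret prob_space "gauss_space d" by (rule prob_space_gauss_space)
  define Z where "Z g = cos_avg d u w g / exp (- T / 2)" for g
  define m where "m = (1 / real d) * (\<Sum>i<d. cos (u i))"
  define a where "a = (real s)\<^sup>2 / (real d)\<^sup>2"
  define b where "b = (frob_norm d \<rho>)\<^sup>2 / (real d)\<^sup>2 * max (real s / frob_norm d \<rho>) 1 * exp T"
  have b_nonneg: "0 \<le> b"
    unfolding b_def by (intro mult_nonneg_nonneg) auto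
  note moments = normalized_moments[folded Z_def m_def]
  have "(\<integral>g. (Z g - 1)\<^sup>2 \<partial>gauss_space d) = (\<integral>g. (Z g - m)\<^sup>2 \<partial>gauss_space d) + (m - 1)\<^sup>2"
    using integral_sq_sub_eq_variance_add[of Z 1] moments(1-3) by simp
  also have "\<dots> \<le> 2 * b + 4 * a"
  proof (rule add_mono)
    show "(\<integral>g. (Z g - m)\<^sup>2 \<partial>gauss_space d) \<le> 2 * b"
      using moments(4) unfolding b_def .
    show "(m - 1)\<^sup>2 \<le> 4 * a"
      using power_mono[OF moments(6,5), of 2] by (simp add: a_def power2_commute power_divide)
  qed
  also have "\<dots> \<le> 4 * (a + b)"
    using b_nonneg by simp
  finally show ?thesis
    by (simp add: Z_def a_def b_def)
qed

lemma near_one_prob_ge: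
  assumes "real s \<le> real d / 8"
  shows "1 - 32 * (frob_norm d \<rho>)\<^sup>2 / (real d)\<^sup>2 * max (real s / frob_norm d \<rho>) 1 * exp T
    \<le> measure (gauss_space d) {g \<in> space (gauss_space d).
         1 / 2 * exp (- T / 2) \<le> cos_avg d u w g \<and> cos_avg d u w g \<le> 3 / 2 * exp (- T / 2)}"
proof -
  interpret prob_space "gauss_space d" by (rule prob_space_gauss_space)
  define Z where "Z g = cos_avg d u w g / exp (- T / 2)" for g
  define m where "m = (1 / real d) * (\<Sum>i<d. cos (u i))"
  note moments = normalized_moments[folded Z_def m_def]
  have "2 * real s / real d \<le> 1 / 4"
    using d_pos assms by (simp add: field_simps)
  then have "\<bar>expectation Z - 1\<bar> \<le> 1 / 4"
    using moments(3,5,6) by (auto simp: abs_le_iff)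
  moreover have "Z \<in> borel_measurable (gauss_space d)"
    unfolding Z_def by measurable
  ultimately have "1 - 16 * variance Z \<le> prob {g \<in> space (gauss_space d). 1 / 2 \<le> Z g \<and> Z g \<le> 3 / 2}"
    using moments(2) by (intro prob_between_halves_ge)
  moreover have "{g \<in> space (gauss_space d). 1 / 2 \<le> Z g \<and> Z g \<le> 3 / 2}
      = {g \<in> space (gauss_space d).
         1 / 2 * exp (- T / 2) \<le> cos_avg d u w g \<and> cos_avg d u w g \<le> 3 / 2 * exp (- T / 2)}"
    by (simp add: Z_def le_divide_eq divide_le_eq)
  ultimately show ?thesis
    using moments(3,4) by simp
qed

end

lemma phi_hat_eq_cos_avg:
  "phi_hat d \<theta> \<sigma> A z
    = cos_avg d (\<lambda>i. z * \<theta> i / sd_i d A i) (\<lambda>i k. z * \<sigma> * A i k / sd_i d A i)"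
proof
  fix g
  have "z * (obs d \<theta> \<sigma> A g i / sd_i d A i)
      = z * \<theta> i / sd_i d A i + (\<Sum>k<d. z * \<sigma> * A i k / sd_i d A i * g k)" for i
    unfolding obs_def noise_def
    by (simp add: add_divide_distrib sum_distrib_left sum_divide_distrib algebra_simps)
  then show "phi_hat d \<theta> \<sigma> A z g
      = cos_avg d (\<lambda>i. z * \<theta> i / sd_i d A i) (\<lambda>i k. z * \<sigma> * A i k / sd_i d A i) g"
    by (simp add: phi_hat_def cos_avg_def)
qed

lemma sum_scaled_rows_mult:
  "(\<Sum>k<d. (c * A i k / sd_i d A i) * (c * A j k / sd_i d A j)) = c\<^sup>2 * cov_tilde d A i j"
  by (simp add: cov_tilde_def cov_of_def sum_distrib_left sum_divide_distrib power2_eq_square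
      algebra_simps)

lemma cov_tilde_self: "0 < cov_of d A i i \<Longrightarrow> cov_tilde d A i i = 1"
  by (simp add: cov_tilde_def sd_i_def)

lemma abs_cov_tilde_le_1: "\<bar>cov_tilde d A i j\<bar> \<le> 1"
proof -
  have nonneg: "0 \<le> cov_of d A k k" for k
    by (simp add: cov_of_def sum_nonneg)
  have cauchy_schwarz: "(cov_of d A i j)\<^sup>2 \<le> cov_of d A i i * cov_of d A j j"
    using Cauchy_Schwarz_ineq_sum[of "A i" "A j" "{..<d}"] by (simp add: cov_of_def power2_eq_square)
  have "(cov_tilde d A i j)\<^sup>2 = (cov_of d A i j)\<^sup>2 / (cov_of d A i i * cov_of d A j j)"
    using nonneg unfolding cov_tilde_def sd_i_def
    by (simp add: power_divide power_mult_distrib real_sqrt_mult[symmetric])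
  also have "\<dots> \<le> 1"
  proof (cases "cov_of d A i i * cov_of d A j j = 0")
    case False
    then have "0 < cov_of d A i i * cov_of d A j j"
      using nonneg[of i] nonneg[of j] by (simp add: less_le)
    then show ?thesis
      using cauchy_schwarz by simp
  qed auto
  finally show ?thesis
    by (simp add: abs_square_le_1)
qed

lemma frob_tilde_eq_frob_norm: "frob_tilde d A = frob_norm d (cov_tilde d A)"
  by (simp add: frob_tilde_def frob_norm_def)

lemma phi_hat_gaussian_cos_model:
  assumes "0 < d" and "\<theta> \<in> B0 s d" and "\<And>i. i < d \<Longrightarrow> 0 < cov_of d A i i"
  shows "gaussian_cos_model d s (z\<^sup>2 * \<sigma>\<^sup>2) (\<lambda>i. z * \<theta> i / sd_i d A i)
    (\<lambda>i k. z * \<sigma> * A i k / sd_i d A i) (cov_tilde d A)"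
proof
  show "(\<Sum>k<d. z * \<sigma> * A i k / sd_i d A i * (z * \<sigma> * A j k / sd_i d A j))
      = z\<^sup>2 * \<sigma>\<^sup>2 * cov_tilde d A i j" for i j
    using sum_scaled_rows_mult[of "z * \<sigma>"] by (simp add: power_mult_distrib)
  then show "(\<Sum>k<d. (z * \<sigma> * A i k / sd_i d A i)\<^sup>2) = z\<^sup>2 * \<sigma>\<^sup>2" if "i < d" for i
    using cov_tilde_self[OF assms(3)[OF that]] by (simp add: power2_eq_square)
  have "card {i \<in> {..<d}. z * \<theta> i / sd_i d A i \<noteq> 0} \<le> card {i \<in> {..<d}. \<theta> i \<noteq> 0}"
    by (intro card_mono) auto
  then show "card {i \<in> {..<d}. z * \<theta> i / sd_i d A i \<noteq> 0} \<le> s"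
    using assms(2) by (simp add: B0_def)
qed (use assms(1) abs_cov_tilde_le_1 in auto)

theorem lemma6:
  shows "\<exists>C>0. \<forall>(d::nat) (s::nat) (\<sigma>::real) (\<theta>::nat \<Rightarrow> real) (A::nat \<Rightarrow> nat \<Rightarrow> real) (c::real) (z::real).
     1 \<le> s \<longrightarrow> s \<le> d \<longrightarrow> \<sigma> > 0 \<longrightarrow> \<theta> \<in> B0 s d \<longrightarrow> c > 0 \<longrightarrow> (\<forall>i<d. cov_of d A i i \<ge> c) \<longrightarrow>
     ((\<integral>g. (phi_hat d \<theta> \<sigma> A z g / exp (- z\<^sup>2 * \<sigma>\<^sup>2 / 2) - 1)\<^sup>2 \<partial>gauss_space d)
        \<le> C * ((real s)\<^sup>2 / (real d)\<^sup>2
              + (frob_tilde d A)\<^sup>2 / (real d)\<^sup>2 * max (real s / frob_tilde d A) 1 * exp (z\<^sup>2 * \<sigma>\<^sup>2))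
      \<and> (real s \<le> real d / 8 \<longrightarrow>
         measure (gauss_space d)
           {g \<in> space (gauss_space d).
              1/2 * exp (- z\<^sup>2 * \<sigma>\<^sup>2 / 2) \<le> phi_hat d \<theta> \<sigma> A z g
              \<and> phi_hat d \<theta> \<sigma> A z g \<le> 3/2 * exp (- z\<^sup>2 * \<sigma>\<^sup>2 / 2)}
         \<ge> 1 - C * (frob_tilde d A)\<^sup>2 / (real d)\<^sup>2 * max (real s / frob_tilde d A) 1 * exp (z\<^sup>2 * \<sigma>\<^sup>2)))"
proof (intro exI[of _ 32] conjI allI impI)
  fix d s :: nat and \<sigma> c z :: real and \<theta> :: "nat \<Rightarrow> real" and A :: "nat \<Rightarrow> nat \<Rightarrow> real"
  assume "1 \<le> s" "s \<le> d" "\<theta> \<in> B0 s d" "0 < c" "\<forall>i<d. c \<le> cov_of d A i i"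
  then interpret gaussian_cos_model d s "z\<^sup>2 * \<sigma>\<^sup>2" "\<lambda>i. z * \<theta> i / sd_i d A i"
    "\<lambda>i k. z * \<sigma> * A i k / sd_i d A i" "cov_tilde d A"
    by (intro phi_hat_gaussian_cos_model) force+
  have exp_eq: "exp (- z\<^sup>2 * \<sigma>\<^sup>2 / 2) = exp (- (z\<^sup>2 * \<sigma>\<^sup>2) / 2)"
    by simp
  have bound_nonneg: "0 \<le> (real s)\<^sup>2 / (real d)\<^sup>2 + (frob_norm d (cov_tilde d A))\<^sup>2 / (real d)\<^sup>2
      * max (real s / frob_norm d (cov_tilde d A)) 1 * exp (z\<^sup>2 * \<sigma>\<^sup>2)"
    by simp
  show "(\<integral>g. (phi_hat d \<theta> \<sigma> A z g / exp (- z\<^sup>2 * \<sigma>\<^sup>2 / 2) - 1)\<^sup>2 \<partial>gauss_space d)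
      \<le> 32 * ((real s)\<^sup>2 / (real d)\<^sup>2 + (frob_tilde d A)\<^sup>2 / (real d)\<^sup>2
        * max (real s / frob_tilde d A) 1 * exp (z\<^sup>2 * \<sigma>\<^sup>2))"
    using mean_square_error_le unfolding phi_hat_eq_cos_avg frob_tilde_eq_frob_norm exp_eq
    by (rule order_trans) (intro mult_right_mono bound_nonneg, simp)
  show "1 - 32 * (frob_tilde d A)\<^sup>2 / (real d)\<^sup>2 * max (real s / frob_tilde d A) 1 * exp (z\<^sup>2 * \<sigma>\<^sup>2)
      \<le> measure (gauss_space d) {g \<in> space (gauss_space d).
        1/2 * exp (- z\<^sup>2 * \<sigma>\<^sup>2 / 2) \<le> phi_hat d \<theta> \<sigma> A z g
        \<and> phi_hat d \<theta> \<sigma> A z g \<le> 3/2 * exp (- z\<^sup>2 * \<sigma>\<^sup>2 / 2)}"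
    if "real s \<le> real d / 8"
    using near_one_prob_ge[OF that]
    unfolding phi_hat_eq_cos_avg frob_tilde_eq_frob_norm exp_eq by simp
qed simp

end
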